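(* Let $d\ge2$, $(S,\mathfrak n,\mathbf k)$ a complete regular local ring with $\mathbf k$ algebraically closed of characteristic not dividing $d$, $0\ne f\in\mathfrak n^2$, and $R^\sharp=S[[z]]/(f+z^d)$. Let $N$ be a maximal Cohen-Macaulay $R^\sharp$-module and $X\in\mathrm{MF}_S^d(f)$. Then $X^{\sharp\flat}\cong\bigoplus_{k\in\mathbb Z_d}T^k(X)$ in $\mathrm{MF}_S^d(f)$ and $N^{\flat\sharp}\cong\bigoplus_{k\in\mathbb Z_d}(\sigma^k)^*N$ as $R^\sharp$-modules.
   Context: $\mathrm{MF}_S^d(f)$ is the category of matrix factorizations of $f$ with $d$ factors: objects are $X=(\phi_1:F_2\to F_1,\dots,\phi_d:F_1\to F_d)$, $F_i$ finitely generated free $S$-modules of equal rank, with $\phi_1\cdots\phi_d=f\cdot1_{F_1}$; morphisms $(\alpha_1,\dots,\alpha_d)$, $\alpha_i:F_i\to F_i'$, with $\alpha_i\phi_i=\phi_i'\alpha_{i+1}$ (indices mod $d$). The shift functor is $T(\phi_1,\dots,\phi_d)=(\phi_2,\dots,\phi_d,\phi_1)$. A maximal Cohen-Macaulay (MCM) $R^\sharp$-module is the same as a finitely generated $R^\sharp$-module that is free over $S$. Fix $\mu\in S$ with $\mu^d=-1$ and a primitive $d$th root of unity $\omega\in S$ (these exist). For an MCM $R^\sharp$-module $N$ with $\phi:N\to N$ the $S$-linear map given by multiplication by $z$, set $N^\flat=(\mu\phi,\mu\phi,\dots,\mu\phi)\in\mathrm{MF}_S^d(f)$. For $X=(\phi_1,\dots,\phi_d)$,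 $X^\sharp$ is the $S$-module $F_d\oplus F_{d-1}\oplus\cdots\oplus F_1$ with $z\cdot(x_d,x_{d-1},\dots,x_1)=(\mu^{-1}\phi_d(x_1),\mu^{-1}\phi_{d-1}(x_d),\dots,\mu^{-1}\phi_1(x_2))$, an MCM $R^\sharp$-module. $\sigma:R^\sharp\to R^\sharp$ is the automorphism fixing $S$ with $\sigma(z)=\omega z$, and $(\sigma^k)^*N$ denotes $N$ with scalars restricted along $\sigma^k$. *)

theory Defs
  imports "Jordan_Normal_Form.Matrix" "HOL-Computational_Algebra.Polynomial"
begin

definition is_ideal :: "'a::comm_ring_1 set \<Rightarrow> bool" where
  "is_ideal I \<longleftrightarrow> 0 \<in> I \<and> (\<forall>x\<in>I. \<forall>y\<in>I. x + y \<in> I) \<and> (\<forall>r. \<forall>x\<in>I. r * x \<in> I)"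

definition is_prime_ideal :: "'a::comm_ring_1 set \<Rightarrow> bool" where
  "is_prime_ideal P \<longleftrightarrow> is_ideal P \<and> P \<noteq> UNIV \<and> (\<forall>a b. a * b \<in> P \<longrightarrow> a \<in> P \<or> b \<in> P)"

definition gen_ideal :: "'a::comm_ring_1 set \<Rightarrow> 'a set" where
  "gen_ideal G = \<Inter>{J. is_ideal J \<and> G \<subseteq> J}"

definition noetherian_ring :: "'a::comm_ring_1 itself \<Rightarrow> bool" where
  "noetherian_ring _ \<longleftrightarrow> (\<forall>I::'a set. is_ideal I \<longrightarrow> (\<exists>G. finite G \<and> gen_ideal G = I))"

text \<open>The set of non-units; S is local iff this is an ideal (then it is the unique maximal ideal).\<close>
definition max_ideal :: "'a::comm_ring_1 set" where
  "max_ideal = {x. \<not> x dvd 1}"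

definition local_ring :: "'a::comm_ring_1 itself \<Rightarrow> bool" where
  "local_ring _ \<longleftrightarrow> is_ideal (max_ideal :: 'a set)"

definition prime_chain :: "'a::comm_ring_1 itself \<Rightarrow> nat \<Rightarrow> bool" where
  "prime_chain _ k \<longleftrightarrow> (\<exists>P :: nat \<Rightarrow> 'a set. (\<forall>i\<le>k. is_prime_ideal (P i)) \<and> (\<forall>i<k. P i \<subset> P (Suc i)))"

definition embedding_dim :: "'a::comm_ring_1 itself \<Rightarrow> nat" where
  "embedding_dim _ = (LEAST k. \<exists>G::'a set. finite G \<and> card G = k \<and> gen_ideal G = max_ideal)"

definition regular_local_ring :: "'a::comm_ring_1 itself \<Rightarrow> bool" where
  "regular_local_ring T \<longleftrightarrow> noetherian_ring T \<and> local_ring T \<and>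
     (\<exists>e. prime_chain T e \<and> (\<forall>k. prime_chain T k \<longrightarrow> k \<le> e) \<and> embedding_dim T = e)"

definition ideal_pow :: "'a::comm_ring_1 set \<Rightarrow> nat \<Rightarrow> 'a set" where
  "ideal_pow I k = gen_ideal {prod_list xs | xs. length xs = k \<and> set xs \<subseteq> I}"

definition complete_local_ring :: "'a::comm_ring_1 itself \<Rightarrow> bool" where
  "complete_local_ring _ \<longleftrightarrow>
     (\<Inter>k. ideal_pow (max_ideal::'a set) k) = {0} \<and>
     (\<forall>s::nat \<Rightarrow> 'a. (\<forall>k. \<exists>N. \<forall>i\<ge>N. \<forall>j\<ge>N. s i - s j \<in> ideal_pow max_ideal k) \<longrightarrow>
        (\<exists>L. \<forall>k. \<exists>N. \<forall>i\<ge>N. s i - L \<in> ideal_pow max_ideal k))"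

text \<open>Residue field S/n is algebraically closed: every monic nonconstant polynomial has a root mod n.\<close>
definition residue_field_alg_closed :: "'a::comm_ring_1 itself \<Rightarrow> bool" where
  "residue_field_alg_closed _ \<longleftrightarrow>
     (\<forall>p::'a poly. lead_coeff p = 1 \<and> degree p \<ge> 1 \<longrightarrow> (\<exists>a. poly p a \<in> max_ideal))"

definition primitive_root :: "nat \<Rightarrow> 'a::comm_ring_1 \<Rightarrow> bool" where
  "primitive_root d w \<longleftrightarrow> w ^ d = 1 \<and> (\<forall>j. 0 < j \<and> j < d \<longrightarrow> w ^ j \<noteq> 1)"

definition unit_inv :: "'a::comm_ring_1 \<Rightarrow> 'a" where
  "unit_inv u = (THE v. u * v = 1)"

text \<open>X = [phi_1, ..., phi_d] (0-indexed list), all n x n, phi_1 * ... * phi_d = f * 1.\<close>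
definition is_MF :: "nat \<Rightarrow> 'a::comm_ring_1 \<Rightarrow> nat \<Rightarrow> 'a mat list \<Rightarrow> bool" where
  "is_MF d f n X \<longleftrightarrow> length X = d \<and> (\<forall>i<d. X ! i \<in> carrier_mat n n) \<and>
     foldr (*) X (1\<^sub>m n) = f \<cdot>\<^sub>m 1\<^sub>m n"

definition is_MF_hom :: "nat \<Rightarrow> nat \<Rightarrow> nat \<Rightarrow> 'a::comm_ring_1 mat list \<Rightarrow> 'a mat list \<Rightarrow> 'a mat list \<Rightarrow> bool" where
  "is_MF_hom d n n' X X' A \<longleftrightarrow> length A = d \<and> (\<forall>i<d. A ! i \<in> carrier_mat n' n) \<and>
     (\<forall>i<d. A ! i * X ! i = X' ! i * A ! ((i + 1) mod d))"

definition MF_iso :: "nat \<Rightarrow> 'a::comm_ring_1 mat list \<Rightarrow> 'a mat list \<Rightarrow> bool" where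
  "MF_iso d X X' \<longleftrightarrow> (\<exists>A B. is_MF_hom d (dim_row (X ! 0)) (dim_row (X' ! 0)) X X' A \<and>
      is_MF_hom d (dim_row (X' ! 0)) (dim_row (X ! 0)) X' X B \<and>
      (\<forall>i<d. B ! i * A ! i = 1\<^sub>m (dim_row (X ! 0)) \<and> A ! i * B ! i = 1\<^sub>m (dim_row (X' ! 0))))"

definition MF_shift :: "nat \<Rightarrow> 'a mat list \<Rightarrow> 'a mat list" where
  "MF_shift k X = rotate k X"

definition MF_sum :: "nat \<Rightarrow> 'a::zero mat list list \<Rightarrow> 'a mat list" where
  "MF_sum d Xs = map (\<lambda>i. diag_block_mat (map (\<lambda>X. X ! i) Xs)) [0..<d]"

text \<open>An MCM R#-module (R# = S[[z]]/(f+z^d)) is represented by (a basis of) its underlying free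
  S-module S^m together with the matrix Z of multiplication by z.\<close>
definition is_MCM :: "nat \<Rightarrow> 'a::comm_ring_1 \<Rightarrow> 'a mat \<Rightarrow> bool" where
  "is_MCM d f Z \<longleftrightarrow> Z \<in> carrier_mat (dim_row Z) (dim_row Z) \<and>
     Z ^\<^sub>m d = - (f \<cdot>\<^sub>m 1\<^sub>m (dim_row Z))"

definition MCM_iso :: "'a::comm_ring_1 mat \<Rightarrow> 'a mat \<Rightarrow> bool" where
  "MCM_iso Z Z' \<longleftrightarrow> (\<exists>P Q. P \<in> carrier_mat (dim_row Z') (dim_row Z) \<and>
      Q \<in> carrier_mat (dim_row Z) (dim_row Z') \<and>
      Q * P = 1\<^sub>m (dim_row Z) \<and> P * Q = 1\<^sub>m (dim_row Z') \<and> P * Z = Z' * P)"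

definition MCM_sum :: "'a::zero mat list \<Rightarrow> 'a mat" where
  "MCM_sum Zs = diag_block_mat Zs"

text \<open>Restriction of scalars along sigma^k (sigma(z) = omega z): z now acts by omega^k Z.\<close>
definition restrict_sigma :: "'a::comm_ring_1 \<Rightarrow> nat \<Rightarrow> 'a mat \<Rightarrow> 'a mat" where
  "restrict_sigma \<omega> k Z = (\<omega> ^ k) \<cdot>\<^sub>m Z"

definition flat :: "nat \<Rightarrow> 'a::comm_ring_1 \<Rightarrow> 'a mat \<Rightarrow> 'a mat list" where
  "flat d \<mu> Z = replicate d (\<mu> \<cdot>\<^sub>m Z)"

text \<open>X-sharp on F_d + F_(d-1) + ... + F_1: block number j (0-based) is F_(d-j);
  z(x_d,...,x_1) = (mu^-1 phi_d x_1, mu^-1 phi_(d-1) x_d, ..., mu^-1 phi_1 x_2).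
  So block (j, (j-1) mod d) is mu^-1 phi_(d-j) (phi_d for j = 0), i.e. list index (2d-j-1) mod d.\<close>
definition sharp :: "nat \<Rightarrow> 'a::comm_ring_1 \<Rightarrow> 'a mat list \<Rightarrow> 'a mat" where
  "sharp d \<mu> X = (let n = dim_row (X ! 0) in
     mat (d * n) (d * n) (\<lambda>(r, c).
       if c div n = (r div n + d - 1) mod d
       then unit_inv \<mu> * (X ! ((2 * d - r div n - 1) mod d)) $$ (r mod n, c mod n)
       else 0))"

end

theory Submission
  imports Defs
begin

(* Both isomorphisms are given by explicit matrices and use nothing about f.
   In block form, the d factors of the flat of X-sharp all equal the block matrix W
   carrying the factors of X on its cyclic subdiagonal (in reversed order), while the
   i-th factor of the sum of the shifts T^k X is block diagonal. Permuting the blocks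
   by the involution j |-> -(j + i + 1) mod d carries W to that block diagonal matrix,
   and the permutation matrices for consecutive i form a morphism of matrix factorizations.
   For an MCM module with z acting by Z, the sharp of N-flat is the Kronecker product
   C (x) Z of the cyclic shift C with Z, and the sum of the twists is diag(omega^k) (x) Z.
   The Fourier matrix F = (omega^(j k)) satisfies F C = diag(omega^k) F, and it is
   invertible because d is a unit and in a local ring the powers of a d-th root of
   unity u <> 1 sum to 0. *)

section \<open>Index arithmetic modulo d\<close>

lemma mod_eq_0_below_double:
  assumes "0 < x" "x < 2 * d" shows "x mod d = 0 \<longleftrightarrow> x = (d::nat)"
proof (cases "x < d")
  case False
  then have "x mod d = x - d" using assms(2) by (simp add: le_mod_geq)
  then show ?thesis using False by auto
qed (use assms in auto)

lemma eq_pred_mod_iff: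
  assumes "l < d" "m < (d::nat)" shows "l = (m + d - 1) mod d \<longleftrightarrow> (l + 1) mod d = m"
proof (cases m)
  case 0
  then show ?thesis using assms by (cases "l + 1 = d") auto
next
  case (Suc m')
  then have "(m + d - 1) mod d = m'" using assms(2) by (simp add: le_mod_geq)
  moreover have "(l + 1) mod d = m \<longleftrightarrow> l = m'"
    using assms Suc by (cases "l + 1 = d") auto
  ultimately show ?thesis by simp
qed

(* -(j + i + 1) mod d; the reversal reflects the decreasing order F_d, ..., F_1 of the
   summands of X-sharp. *)
definition mirror_index :: "nat \<Rightarrow> nat \<Rightarrow> nat \<Rightarrow> nat" where
  "mirror_index d i j = d - Suc ((j + i) mod d)"

lemma mirror_index_less: "0 < d \<Longrightarrow> mirror_index d i j < d"
  by (simp add: mirror_index_def)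

lemma mirror_index_iff:
  assumes "t < d"
  shows "t = mirror_index d i j \<longleftrightarrow> (t + j + i + 1) mod d = 0"
proof -
  define s where "s = (j + i) mod d"
  have s: "s < d" using assms by (simp add: s_def)
  have "(t + j + i + 1) mod d = ((t + 1) + (j + i)) mod d" by (simp add: ac_simps)
  also have "\<dots> = ((t + 1) + s) mod d" unfolding s_def by (rule mod_add_right_eq[symmetric])
  finally have "(t + j + i + 1) mod d = 0 \<longleftrightarrow> t + s + 1 = d"
    using mod_eq_0_below_double[of "t + s + 1" d] assms s by (simp add: ac_simps)
  then show ?thesis using s by (auto simp: mirror_index_def s_def)
qed

lemma mirror_index_involution:
  assumes "0 < d" "j < d" shows "mirror_index d i (mirror_index d i j) = j"
proof -
  have "(mirror_index d i j + j + i + 1) mod d = 0"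
    using mirror_index_iff[of "mirror_index d i j" d i j] mirror_index_less[OF assms(1)] by simp
  then show ?thesis
    using mirror_index_iff[OF assms(2), of i "mirror_index d i j"] by (simp add: ac_simps)
qed

lemma mirror_index_pred:
  assumes "j < d" "l < d"
  shows "l = (mirror_index d i j + d - 1) mod d \<longleftrightarrow> j = mirror_index d (Suc i mod d) l"
proof -
  have "l = (mirror_index d i j + d - 1) mod d \<longleftrightarrow> (l + 1) mod d = mirror_index d i j"
    using assms by (intro eq_pred_mod_iff mirror_index_less) auto
  also have "\<dots> \<longleftrightarrow> ((l + 1) mod d + j + i + 1) mod d = 0"
    using assms by (intro mirror_index_iff) auto
  also have "\<dots> \<longleftrightarrow> (j + l + i + 2) mod d = 0"
    using mod_add_left_eq[of "l + 1" d "j + i + 1"] by (simp add: ac_simps)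
  also have "\<dots> \<longleftrightarrow> (j + l + Suc i mod d + 1) mod d = 0"
    using mod_add_right_eq[of "j + l + 1" "Suc i" d] by (simp add: ac_simps)
  also have "\<dots> \<longleftrightarrow> j = mirror_index d (Suc i mod d) l"
    using mirror_index_iff[OF assms(1)] by simp
  finally show ?thesis .
qed

lemma mirror_index_reverse:
  assumes "j < d"
  shows "(2 * d - mirror_index d i j - 1) mod d = (j + i) mod d"
proof -
  have "(j + i) mod d < d" using assms by simp
  then have "2 * d - mirror_index d i j - 1 = d + (j + i) mod d"
    by (simp add: mirror_index_def)
  then show ?thesis by simp
qed

section \<open>Roots of unity in a local ring\<close>

lemma unit_inv_eq: "(x::'a::comm_ring_1) * y = 1 \<Longrightarrow> unit_inv x = y"
  unfolding unit_inv_def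
proof (rule the_equality)
  fix v assume "x * y = 1" "x * v = 1"
  then have "v = (x * y) * v" by simp
  also have "\<dots> = (x * v) * y" by (simp only: ac_simps)
  finally show "v = y" using \<open>x * v = 1\<close> by simp
qed

lemma mult_unit_inv_if_power_eq_minus_one:
  assumes "(\<mu>::'a::comm_ring_1) ^ d = -1" "0 < d"
  shows "\<mu> * unit_inv \<mu> = 1"
proof -
  have inverse: "\<mu> * (- (\<mu> ^ (d - 1))) = 1"
    using assms by (cases d) auto
  then show ?thesis by (simp only: unit_inv_eq[OF inverse])
qed

lemma local_ring_unit_add_nonunit:
  assumes "local_ring TYPE('a::comm_ring_1)" "(x::'a) dvd 1" "y \<in> max_ideal"
  shows "(x + y) dvd 1"
proof (rule ccontr)
  assume "\<not> (x + y) dvd 1"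
  then have "(x + y) + (-1) * y \<in> max_ideal"
    using assms(1,3) unfolding local_ring_def is_ideal_def max_ideal_def by blast
  then show False using assms(2) by (simp add: max_ideal_def)
qed

lemma sum_powers_nontrivial_root_of_unity:
  fixes u :: "'a::comm_ring_1"
  assumes loc: "local_ring TYPE('a)" and d_unit: "of_nat d \<notin> (max_ideal :: 'a set)"
    and "u ^ d = 1" "u \<noteq> 1"
  shows "(\<Sum>k<d. u ^ k) = 0"
proof -
  define G where "G = (\<Sum>k<d. u ^ k)"
  have ideal: "is_ideal (max_ideal :: 'a set)" using loc by (simp add: local_ring_def)
  have annihilate: "(u - 1) * G = 0"
    using power_diff_1_eq[of u d] assms(3) by (simp add: G_def)
  have "(u - 1) dvd 1"
  proof (rule ccontr)
    assume "\<not> (u - 1) dvd 1"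
    then have u_max: "u - 1 \<in> max_ideal" by (simp add: max_ideal_def)
    \<comment> \<open>modulo the maximal ideal each power of u is 1, so G is congruent to the unit d\<close>
    have "u ^ k - 1 \<in> max_ideal" for k
    proof -
      have "u ^ k - 1 = (\<Sum>i<k. u ^ i) * (u - 1)"
        using power_diff_1_eq[of u k] by (simp add: mult.commute)
      then show ?thesis using ideal u_max by (simp add: is_ideal_def)
    qed
    then have "(\<Sum>k<d. u ^ k - 1) \<in> max_ideal"
      by (induction d) (use ideal in \<open>auto simp: is_ideal_def\<close>)
    then have "G - of_nat d \<in> max_ideal" by (simp add: G_def sum_subtractf)
    moreover have "(of_nat d :: 'a) dvd 1" using d_unit by (simp add: max_ideal_def)
    ultimately have "(of_nat d + (G - of_nat d)) dvd 1"
      using local_ring_unit_add_nonunit[OF loc] by blast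
    then obtain h where "1 = G * h" by (auto elim: dvdE)
    then have "u - 1 = (u - 1) * G * h" by (simp add: mult.assoc)
    then have "u - 1 = 0" using annihilate by simp
    then show False using assms(4) by simp
  qed
  then obtain h where "1 = (u - 1) * h" by (rule dvdE)
  then have "G = h * ((u - 1) * G)" by (metis mult.commute mult.left_commute mult_1_left)
  then show ?thesis using annihilate by (simp add: G_def)
qed

lemma primitive_root_pow_inj:
  assumes prim: "primitive_root d \<omega>" and "j < d" "l < d" "\<omega> ^ j = \<omega> ^ l"
  shows "j = l"
proof -
  have no_collision: False if "a < b" "b < d" "\<omega> ^ a = \<omega> ^ b" for a b
  proof -
    have "a * (d - 1) + a = d * a" using that by (cases d) simp_all
    then have "\<omega> ^ (a * (d - 1)) * \<omega> ^ a = (\<omega> ^ d) ^ a"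
      by (metis power_add power_mult)
    then have inverse: "\<omega> ^ (a * (d - 1)) * \<omega> ^ a = 1"
      using prim by (simp add: primitive_root_def)
    have "\<omega> ^ (b - a) = \<omega> ^ (a * (d - 1)) * (\<omega> ^ a * \<omega> ^ (b - a))"
      using inverse by (simp add: mult.assoc[symmetric])
    also have "\<omega> ^ a * \<omega> ^ (b - a) = \<omega> ^ b"
      using \<open>a < b\<close> by (simp flip: power_add)
    also have "\<dots> = \<omega> ^ a"
      using that(3) by simp
    finally have "\<omega> ^ (b - a) = 1" using inverse by simp
    then show False using prim that by (simp add: primitive_root_def)
  qed
  show ?thesis
    using no_collision[of j l] no_collision[of l j] assms(2-4) by (metis linorder_neqE_nat)
qed

lemma root_of_unity_power_mod:
  assumes "(\<omega>::'a::comm_ring_1) ^ d = 1" shows "\<omega> ^ (n mod d) = \<omega> ^ n"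
proof -
  have "\<omega> ^ n = \<omega> ^ (d * (n div d) + n mod d)" by simp
  also have "\<dots> = (\<omega> ^ d) ^ (n div d) * \<omega> ^ (n mod d)" by (simp only: power_add power_mult)
  finally show ?thesis using assms by simp
qed

lemma sum_powers_primitive_root_orthogonal:
  fixes \<omega> \<omega>' :: "'a::comm_ring_1"
  assumes loc: "local_ring TYPE('a)" and d_unit: "of_nat d \<notin> (max_ideal :: 'a set)"
    and prim: "primitive_root d \<omega>" and inverse: "\<omega>' * \<omega> = 1" and "j < d" "l < d"
  shows "(\<Sum>k<d. (\<omega>' ^ j * \<omega> ^ l) ^ k) = (if j = l then of_nat d else 0)"
proof (cases "j = l")
  case True
  then have "\<omega>' ^ j * \<omega> ^ l = 1" using inverse by (simp flip: power_mult_distrib)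
  then show ?thesis using True by simp
next
  case False
  define u where "u = \<omega>' ^ j * \<omega> ^ l"
  have \<omega>d: "\<omega> ^ d = 1" using prim by (simp add: primitive_root_def)
  have "\<omega>' ^ d = (\<omega>' * \<omega>) ^ d" using \<omega>d by (simp add: power_mult_distrib)
  then have \<omega>'d: "\<omega>' ^ d = 1" using inverse by simp
  have "u ^ d = (\<omega>' ^ d) ^ j * (\<omega> ^ d) ^ l"
    by (simp add: u_def power_mult_distrib mult.commute flip: power_mult)
  then have "u ^ d = 1" using \<omega>d \<omega>'d by simp
  moreover have "u \<noteq> 1"
  proof
    assume "u = 1"
    then have "\<omega> ^ j = (\<omega>' ^ j * \<omega> ^ j) * \<omega> ^ l" by (simp add: u_def ac_simps)
    then have "\<omega> ^ j = \<omega> ^ l" using inverse by (simp flip: power_mult_distrib)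
    then show False using primitive_root_pow_inj[OF prim] assms(5,6) False by blast
  qed
  ultimately show ?thesis
    using sum_powers_nontrivial_root_of_unity[OF loc d_unit] False by (simp add: u_def)
qed

section \<open>Square block matrices\<close>

definition block_mat :: "nat \<Rightarrow> nat \<Rightarrow> (nat \<Rightarrow> nat \<Rightarrow> 'a mat) \<Rightarrow> 'a mat" where
  "block_mat d n B = mat (d * n) (d * n) (\<lambda>(r, c). B (r div n) (c div n) $$ (r mod n, c mod n))"

lemma block_mat_carrier [simp]: "block_mat d n B \<in> carrier_mat (d * n) (d * n)"
  by (simp add: block_mat_def)

lemma dim_block_mat [simp]:
  "dim_row (block_mat d n B) = d * n" "dim_col (block_mat d n B) = d * n"
  by (simp_all add: block_mat_def)

lemma block_index_less:
  assumes "r < d * (n::nat)" shows "r div n < d" "r mod n < n"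
proof -
  have "n > 0" using assms by (cases n) auto
  then show "r div n < d" "r mod n < n"
    using assms by (simp_all add: less_mult_imp_div_less mult.commute)
qed

lemma block_mat_cong:
  assumes "\<And>j l a b. j < d \<Longrightarrow> l < d \<Longrightarrow> a < n \<Longrightarrow> b < n
    \<Longrightarrow> A j l $$ (a, b) = B j l $$ (a, b)"
  shows "block_mat d n A = block_mat d n B"
  using assms block_index_less by (auto simp: block_mat_def intro!: eq_matI)

lemma sum_lessThan_mult_blocks: "(\<Sum>t<d * n. g t) = (\<Sum>k<d. \<Sum>e<n. g (k * n + e :: nat))"
proof -
  have "(\<Sum>t<d * n. g t) = (\<Sum>k<d. \<Sum>t\<in>{k * n..<k * n + n}. g t)"
    by (rule sum.nat_group[symmetric])
  also have "\<dots> = (\<Sum>k<d. \<Sum>e<n. g (k * n + e))"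
  proof (rule sum.cong[OF refl])
    fix k
    show "(\<Sum>t\<in>{k * n..<k * n + n}. g t) = (\<Sum>e<n. g (k * n + e))"
      using sum.shift_bounds_nat_ivl[of g 0 "k * n" n] by (simp add: atLeast0LessThan add.commute)
  qed
  finally show ?thesis .
qed

lemma index_mult_block_mat:
  fixes A B :: "nat \<Rightarrow> nat \<Rightarrow> 'a::comm_semiring_0 mat"
  assumes "\<And>j l. j < d \<Longrightarrow> l < d \<Longrightarrow> A j l \<in> carrier_mat n n"
    and "\<And>j l. j < d \<Longrightarrow> l < d \<Longrightarrow> B j l \<in> carrier_mat n n"
    and "r < d * n" "c < d * n"
  shows "(block_mat d n A * block_mat d n B) $$ (r, c)
    = (\<Sum>k<d. (A (r div n) k * B k (c div n)) $$ (r mod n, c mod n))"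
proof -
  note bounds = block_index_less[OF assms(3)] block_index_less[OF assms(4)]
  have "(block_mat d n A * block_mat d n B) $$ (r, c)
      = (\<Sum>t<d * n. A (r div n) (t div n) $$ (r mod n, t mod n) * B (t div n) (c div n) $$ (t mod n, c mod n))"
    using assms(3,4) by (simp add: block_mat_def scalar_prod_def atLeast0LessThan)
  also have "\<dots> = (\<Sum>k<d. \<Sum>e<n. A (r div n) k $$ (r mod n, e) * B k (c div n) $$ (e, c mod n))"
    by (simp add: sum_lessThan_mult_blocks)
  also have "\<dots> = (\<Sum>k<d. (A (r div n) k * B k (c div n)) $$ (r mod n, c mod n))"
  proof (rule sum.cong[OF refl])
    fix k assume "k \<in> {..<d}"
    then have "A (r div n) k \<in> carrier_mat n n" "B k (c div n) \<in> carrier_mat n n"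
      using assms(1,2) bounds by auto
    then show "(\<Sum>e<n. A (r div n) k $$ (r mod n, e) * B k (c div n) $$ (e, c mod n))
      = (A (r div n) k * B k (c div n)) $$ (r mod n, c mod n)"
      using bounds by (simp add: scalar_prod_def atLeast0LessThan)
  qed
  finally show ?thesis .
qed

lemma smult_block_mat:
  assumes "\<And>j l. j < d \<Longrightarrow> l < d \<Longrightarrow> B j l \<in> carrier_mat n n"
  shows "k \<cdot>\<^sub>m block_mat d n B = block_mat d n (\<lambda>j l. k \<cdot>\<^sub>m B j l)" (is "?L = ?R")
proof (rule eq_matI)
  fix r c assume "r < dim_row ?R" "c < dim_col ?R"
  then have rc: "r < d * n" "c < d * n" by simp_all
  note bounds = block_index_less[OF rc(1)] block_index_less[OF rc(2)]
  then have "B (r div n) (c div n) \<in> carrier_mat n n" using assms by simp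
  then show "?L $$ (r, c) = ?R $$ (r, c)"
    using rc bounds by (simp add: block_mat_def)
qed simp_all

definition kron_mat :: "'a::times mat \<Rightarrow> 'a mat \<Rightarrow> 'a mat" where
  "kron_mat M Y = block_mat (dim_row M) (dim_row Y) (\<lambda>j l. M $$ (j, l) \<cdot>\<^sub>m Y)"

lemma kron_mat_carrier:
  "M \<in> carrier_mat d d \<Longrightarrow> Y \<in> carrier_mat n n
    \<Longrightarrow> kron_mat M Y \<in> carrier_mat (d * n) (d * n)"
  by (simp add: kron_mat_def)

lemma kron_mat_mult:
  fixes M M' Y Y' :: "'a::comm_semiring_0 mat"
  assumes "M \<in> carrier_mat d d" "M' \<in> carrier_mat d d" "Y \<in> carrier_mat n n" "Y' \<in> carrier_mat n n"
  shows "kron_mat M Y * kron_mat M' Y' = kron_mat (M * M') (Y * Y')" (is "?L = ?R")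
proof (rule eq_matI)
  fix r c assume "r < dim_row ?R" "c < dim_col ?R"
  then have rc: "r < d * n" "c < d * n" using assms by (simp_all add: kron_mat_def)
  note bounds = block_index_less[OF rc(1)] block_index_less[OF rc(2)]
  have "?L $$ (r, c)
      = (\<Sum>k<d. (M $$ (r div n, k) \<cdot>\<^sub>m Y * (M' $$ (k, c div n) \<cdot>\<^sub>m Y')) $$ (r mod n, c mod n))"
    using assms rc by (simp del: index_mult_mat add: kron_mat_def index_mult_block_mat)
  also have "\<dots> = (\<Sum>k<d. M $$ (r div n, k) * M' $$ (k, c div n)) * (Y * Y') $$ (r mod n, c mod n)"
    using assms bounds
    by (simp add: mult_smult_assoc_mat mult_smult_distrib sum_distrib_left sum_distrib_right mult_ac)
  also have "\<dots> = ?R $$ (r, c)"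
    using assms rc bounds by (simp add: kron_mat_def block_mat_def scalar_prod_def atLeast0LessThan)
  finally show "?L $$ (r, c) = ?R $$ (r, c)" .
qed (use assms in \<open>simp_all add: kron_mat_def\<close>)

lemma kron_mat_one: "kron_mat (1\<^sub>m d) (1\<^sub>m n) = (1\<^sub>m (d * n) :: 'a::semiring_1 mat)"
proof (rule eq_matI)
  fix r c assume "r < dim_row (1\<^sub>m (d * n) :: 'a mat)" "c < dim_col (1\<^sub>m (d * n) :: 'a mat)"
  then have rc: "r < d * n" "c < d * n" by simp_all
  have "r = c \<longleftrightarrow> r div n = c div n \<and> r mod n = c mod n"
    by (metis div_mult_mod_eq)
  then show "kron_mat (1\<^sub>m d) (1\<^sub>m n) $$ (r, c) = (1\<^sub>m (d * n) :: 'a mat) $$ (r, c)"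
    using rc block_index_less[OF rc(1)] block_index_less[OF rc(2)]
    by (simp add: kron_mat_def block_mat_def)
qed (simp_all add: kron_mat_def)

definition perm_mat :: "nat \<Rightarrow> (nat \<Rightarrow> nat) \<Rightarrow> 'a::{zero,one} mat" where
  "perm_mat d \<sigma> = mat d d (\<lambda>(j, l). if l = \<sigma> j then 1 else 0)"

lemma perm_mat_carrier [simp]: "perm_mat d \<sigma> \<in> carrier_mat d d"
  and dim_perm_mat [simp]: "dim_row (perm_mat d \<sigma>) = d" "dim_col (perm_mat d \<sigma>) = d"
  by (simp_all add: perm_mat_def)

lemma kron_perm_mat_mult_block_mat:
  fixes B :: "nat \<Rightarrow> nat \<Rightarrow> 'a::comm_semiring_1 mat"
  assumes "\<And>j. j < d \<Longrightarrow> \<sigma> j < d" and "\<And>j l. j < d \<Longrightarrow> l < d \<Longrightarrow> B j l \<in> carrier_mat n n"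
  shows "kron_mat (perm_mat d \<sigma>) (1\<^sub>m n) * block_mat d n B = block_mat d n (\<lambda>j l. B (\<sigma> j) l)"
    (is "?L = ?R")
proof (rule eq_matI)
  fix r c assume "r < dim_row ?R" "c < dim_col ?R"
  then have rc: "r < d * n" "c < d * n" by simp_all
  note bounds = block_index_less[OF rc(1)] block_index_less[OF rc(2)]
  have "?L $$ (r, c)
      = (\<Sum>k<d. ((if k = \<sigma> (r div n) then 1 else 0) \<cdot>\<^sub>m 1\<^sub>m n * B k (c div n)) $$ (r mod n, c mod n))"
    using assms bounds rc by (simp del: index_mult_mat add: kron_mat_def index_mult_block_mat perm_mat_def)
  also have "\<dots> = (\<Sum>k<d. if k = \<sigma> (r div n) then B k (c div n) $$ (r mod n, c mod n) else 0)"
  proof (rule sum.cong[OF refl])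
    fix k assume "k \<in> {..<d}"
    then have "B k (c div n) \<in> carrier_mat n n" using assms(2) bounds by simp
    then show "((if k = \<sigma> (r div n) then 1 else 0) \<cdot>\<^sub>m 1\<^sub>m n * B k (c div n)) $$ (r mod n, c mod n)
      = (if k = \<sigma> (r div n) then B k (c div n) $$ (r mod n, c mod n) else 0)"
      using bounds by (simp add: mult_smult_assoc_mat)
  qed
  also have "\<dots> = ?R $$ (r, c)"
    using assms bounds rc by (simp add: block_mat_def)
  finally show "?L $$ (r, c) = ?R $$ (r, c)" .
qed (simp_all add: kron_mat_def)

lemma block_mat_mult_kron_perm_mat:
  fixes B :: "nat \<Rightarrow> nat \<Rightarrow> 'a::comm_semiring_1 mat"
  assumes "\<And>j. j < d \<Longrightarrow> \<sigma> j < d" "\<And>j. j < d \<Longrightarrow> \<sigma> (\<sigma> j) = j"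
    and "\<And>j l. j < d \<Longrightarrow> l < d \<Longrightarrow> B j l \<in> carrier_mat n n"
  shows "block_mat d n B * kron_mat (perm_mat d \<sigma>) (1\<^sub>m n) = block_mat d n (\<lambda>j l. B j (\<sigma> l))"
    (is "?L = ?R")
proof (rule eq_matI)
  fix r c assume "r < dim_row ?R" "c < dim_col ?R"
  then have rc: "r < d * n" "c < d * n" by simp_all
  note bounds = block_index_less[OF rc(1)] block_index_less[OF rc(2)]
  have swap: "c div n = \<sigma> k \<longleftrightarrow> k = \<sigma> (c div n)" if "k < d" for k
    using assms(1,2) bounds that by metis
  have "?L $$ (r, c)
      = (\<Sum>k<d. (B (r div n) k * ((if c div n = \<sigma> k then 1 else 0) \<cdot>\<^sub>m 1\<^sub>m n)) $$ (r mod n, c mod n))"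
    using assms bounds rc by (simp del: index_mult_mat add: kron_mat_def index_mult_block_mat perm_mat_def)
  also have "\<dots> = (\<Sum>k<d. if k = \<sigma> (c div n) then B (r div n) k $$ (r mod n, c mod n) else 0)"
  proof (rule sum.cong[OF refl])
    fix k assume k: "k \<in> {..<d}"
    then have "B (r div n) k \<in> carrier_mat n n" using assms(3) bounds by simp
    then show "(B (r div n) k * ((if c div n = \<sigma> k then 1 else 0) \<cdot>\<^sub>m 1\<^sub>m n)) $$ (r mod n, c mod n)
      = (if k = \<sigma> (c div n) then B (r div n) k $$ (r mod n, c mod n) else 0)"
      using bounds swap k by (simp add: mult_smult_distrib)
  qed
  also have "\<dots> = ?R $$ (r, c)"
    using assms bounds rc by (simp add: block_mat_def)
  finally show "?L $$ (r, c) = ?R $$ (r, c)" .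
qed (simp_all add: kron_mat_def)

lemma perm_mat_mult_self_involution:
  assumes "\<And>j. j < d \<Longrightarrow> \<sigma> j < d" "\<And>j. j < d \<Longrightarrow> \<sigma> (\<sigma> j) = j"
  shows "perm_mat d \<sigma> * perm_mat d \<sigma> = (1\<^sub>m d :: 'a::semiring_1 mat)"
proof (rule eq_matI)
  fix j l assume "j < dim_row (1\<^sub>m d :: 'a mat)" "l < dim_col (1\<^sub>m d :: 'a mat)"
  then have jl: "j < d" "l < d" by simp_all
  have "(perm_mat d \<sigma> * perm_mat d \<sigma>) $$ (j, l)
      = (\<Sum>k<d. (if k = \<sigma> j then 1 else 0) * (if l = \<sigma> k then 1 else (0::'a)))"
    using jl by (simp add: perm_mat_def scalar_prod_def atLeast0LessThan)
  also have "\<dots> = (\<Sum>k<d. if k = \<sigma> j then (if l = \<sigma> k then 1 else 0) else 0)"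
    by (intro sum.cong) auto
  also have "\<dots> = (if l = j then 1 else 0)"
    using assms jl by simp
  finally show "(perm_mat d \<sigma> * perm_mat d \<sigma>) $$ (j, l) = (1\<^sub>m d :: 'a mat) $$ (j, l)"
    using jl by simp
qed simp_all

section \<open>The discrete Fourier matrix\<close>

definition dft_mat :: "nat \<Rightarrow> 'a::comm_ring_1 \<Rightarrow> 'a mat" where
  "dft_mat d \<omega> = mat d d (\<lambda>(j, l). \<omega> ^ (j * l))"

lemma dft_mat_carrier [simp]: "dft_mat d \<omega> \<in> carrier_mat d d"
  and dim_dft_mat [simp]: "dim_row (dft_mat d \<omega>) = d" "dim_col (dft_mat d \<omega>) = d"
  by (simp_all add: dft_mat_def)

lemma dft_mat_mult_inverse:
  fixes \<omega> \<omega>' :: "'a::comm_ring_1"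
  assumes loc: "local_ring TYPE('a)" and d_unit: "of_nat d \<notin> (max_ideal :: 'a set)"
    and prim: "primitive_root d \<omega>" and inverse: "\<omega>' * \<omega> = 1"
  shows "dft_mat d \<omega>' * dft_mat d \<omega> = of_nat d \<cdot>\<^sub>m 1\<^sub>m d"
    and "dft_mat d \<omega> * dft_mat d \<omega>' = of_nat d \<cdot>\<^sub>m 1\<^sub>m d"
proof -
  have entry: "(dft_mat d a * dft_mat d b) $$ (j, l) = (\<Sum>k<d. (a ^ j * b ^ l) ^ k)"
    if "j < d" "l < d" for a b :: 'a and j l
    using that by (auto simp: dft_mat_def scalar_prod_def atLeast0LessThan power_mult_distrib
        intro!: sum.cong) (simp_all add: ac_simps flip: power_mult)
  show "dft_mat d \<omega>' * dft_mat d \<omega> = of_nat d \<cdot>\<^sub>m 1\<^sub>m d"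
    by (rule eq_matI) (simp_all del: index_mult_mat(1)
        add: entry sum_powers_primitive_root_orthogonal[OF loc d_unit prim inverse])
  have "(\<Sum>k<d. (\<omega> ^ j * \<omega>' ^ l) ^ k) = (if j = l then of_nat d else 0)"
    if "j < d" "l < d" for j l
    using sum_powers_primitive_root_orthogonal[OF loc d_unit prim inverse that(2,1)]
    by (simp only: mult.commute[of "\<omega> ^ j"] eq_commute[of l])
  then show "dft_mat d \<omega> * dft_mat d \<omega>' = of_nat d \<cdot>\<^sub>m 1\<^sub>m d"
    by (intro eq_matI) (simp_all del: index_mult_mat(1) add: entry)
qed

definition diag_powers_mat :: "nat \<Rightarrow> 'a::comm_ring_1 \<Rightarrow> 'a mat" where
  "diag_powers_mat d \<omega> = mat d d (\<lambda>(j, l). if j = l then \<omega> ^ j else 0)"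

lemma diag_powers_mat_carrier [simp]: "diag_powers_mat d \<omega> \<in> carrier_mat d d"
  and dim_diag_powers_mat [simp]: "dim_row (diag_powers_mat d \<omega>) = d" "dim_col (diag_powers_mat d \<omega>) = d"
  by (simp_all add: diag_powers_mat_def)

lemma dft_mat_mult_cycle:
  assumes "(\<omega>::'a::comm_ring_1) ^ d = 1"
  shows "dft_mat d \<omega> * perm_mat d (\<lambda>j. (j + d - 1) mod d) = diag_powers_mat d \<omega> * dft_mat d \<omega>"
    (is "?L = ?R")
proof (rule eq_matI)
  fix j l assume "j < dim_row ?R" "l < dim_col ?R"
  then have jl: "j < d" "l < d" by simp_all
  have "?L $$ (j, l) = (\<Sum>k<d. \<omega> ^ (j * k) * (if l = (k + d - 1) mod d then 1 else 0))"
    using jl by (simp add: dft_mat_def perm_mat_def scalar_prod_def atLeast0LessThan)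
  also have "\<dots> = (\<Sum>k<d. if k = (l + 1) mod d then \<omega> ^ (j * k) else 0)"
    using jl eq_pred_mod_iff[of l d] by (intro sum.cong) auto
  also have "\<dots> = (\<omega> ^ j) ^ ((l + 1) mod d)"
    using jl by (simp add: power_mult)
  also have "\<dots> = (\<omega> ^ j) ^ (l + 1)"
  proof (rule root_of_unity_power_mod)
    have "(\<omega> ^ j) ^ d = (\<omega> ^ d) ^ j" by (simp only: mult.commute flip: power_mult)
    then show "(\<omega> ^ j) ^ d = 1" using assms by simp
  qed
  also have "\<dots> = \<omega> ^ j * \<omega> ^ (j * l)"
    by (simp add: power_mult)
  also have "\<dots> = (\<Sum>k<d. if k = j then \<omega> ^ j * \<omega> ^ (k * l) else 0)"
    using jl by simp
  also have "\<dots> = (\<Sum>k<d. (if j = k then \<omega> ^ j else 0) * \<omega> ^ (k * l))"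
    by (intro sum.cong) auto
  also have "\<dots> = ?R $$ (j, l)"
    using jl by (simp add: dft_mat_def diag_powers_mat_def scalar_prod_def atLeast0LessThan)
  finally show "?L $$ (j, l) = ?R $$ (j, l)" .
qed simp_all

lemma diag_block_mat_eq_block_mat:
  assumes "\<And>M. M \<in> set Ms \<Longrightarrow> M \<in> carrier_mat n n"
  shows "diag_block_mat Ms = block_mat (length Ms) n (\<lambda>j l. if j = l then Ms ! j else 0\<^sub>m n n)"
  using assms
proof (induction Ms)
  case Nil
  then show ?case by (auto simp: block_mat_def)
next
  case (Cons A Ms)
  then have IH: "diag_block_mat Ms = block_mat (length Ms) n (\<lambda>j l. if j = l then Ms ! j else 0\<^sub>m n n)"
    and A: "A \<in> carrier_mat n n" by auto
  show ?case (is "?L = ?R")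
  proof (rule eq_matI)
    fix r c assume "r < dim_row ?R" "c < dim_col ?R"
    then have rc: "r < n + length Ms * n" "c < n + length Ms * n" by simp_all
    then have "0 < n" by (cases n) auto
    then show "?L $$ (r, c) = ?R $$ (r, c)"
      using A rc by (auto simp: IH Let_def block_mat_def le_div_geq le_mod_geq)
  qed (use Cons in \<open>auto simp: dim_diag_block_mat\<close>)
qed

lemma sharp_eq_block_mat:
  assumes "0 < d" "\<And>i. i < d \<Longrightarrow> X ! i \<in> carrier_mat n n"
  shows "sharp d \<mu> X = block_mat d n (\<lambda>j l.
    if l = (j + d - 1) mod d then unit_inv \<mu> \<cdot>\<^sub>m X ! ((2 * d - j - 1) mod d) else 0\<^sub>m n n)"
    (is "_ = ?B")
proof (rule eq_matI)
  have n: "dim_row (X ! 0) = n" using assms by auto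
  then show "dim_row (sharp d \<mu> X) = dim_row ?B" "dim_col (sharp d \<mu> X) = dim_col ?B"
    by (simp_all add: sharp_def)
  fix r c assume "r < dim_row ?B" "c < dim_col ?B"
  then have rc: "r < d * n" "c < d * n" by simp_all
  have "X ! ((2 * d - r div n - 1) mod d) \<in> carrier_mat n n"
    using assms by simp
  then show "sharp d \<mu> X $$ (r, c) = ?B $$ (r, c)"
    using rc block_index_less[OF rc(1)] block_index_less[OF rc(2)]
    by (simp add: sharp_def n block_mat_def)
qed

lemma flat_sharp_eq_block_mat:
  assumes "\<mu> * unit_inv \<mu> = 1" "\<And>i. i < d \<Longrightarrow> X ! i \<in> carrier_mat n n" "i < d"
  shows "flat d \<mu> (sharp d \<mu> X) ! i = block_mat d n (\<lambda>j l.
    if l = (j + d - 1) mod d then X ! ((2 * d - j - 1) mod d) else 0\<^sub>m n n)"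
proof -
  have X: "X ! ((2 * d - j - 1) mod d) \<in> carrier_mat n n" for j
    using assms by simp
  have "flat d \<mu> (sharp d \<mu> X) ! i = \<mu> \<cdot>\<^sub>m sharp d \<mu> X"
    using assms(3) by (simp add: flat_def)
  also have "\<dots> = block_mat d n (\<lambda>j l. \<mu> \<cdot>\<^sub>m (if l = (j + d - 1) mod d
      then unit_inv \<mu> \<cdot>\<^sub>m X ! ((2 * d - j - 1) mod d) else 0\<^sub>m n n))"
  proof -
    have "sharp d \<mu> X = block_mat d n (\<lambda>j l. if l = (j + d - 1) mod d
        then unit_inv \<mu> \<cdot>\<^sub>m X ! ((2 * d - j - 1) mod d) else 0\<^sub>m n n)"
      using assms by (intro sharp_eq_block_mat) auto
    then show ?thesis
      using X by (simp add: smult_block_mat)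
  qed
  also have "\<dots> = block_mat d n (\<lambda>j l.
      if l = (j + d - 1) mod d then X ! ((2 * d - j - 1) mod d) else 0\<^sub>m n n)"
    using assms(1) carrier_matD[OF X] by (auto simp: mult.assoc[symmetric] intro!: block_mat_cong)
  finally show ?thesis .
qed

lemma MF_sum_shifts_eq_block_mat:
  assumes "length X = d" "\<And>i. i < d \<Longrightarrow> X ! i \<in> carrier_mat n n" "i < d"
  shows "MF_sum d (map (\<lambda>k. MF_shift k X) [0..<d]) ! i
    = block_mat d n (\<lambda>j l. if j = l then X ! ((j + i) mod d) else 0\<^sub>m n n)"
proof -
  have "MF_sum d (map (\<lambda>k. MF_shift k X) [0..<d]) ! i
      = diag_block_mat (map (\<lambda>k. X ! ((k + i) mod d)) [0..<d])"
    using assms by (simp add: MF_sum_def MF_shift_def nth_rotate comp_def add.commute)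
  also have "\<dots> = block_mat d n (\<lambda>j l. if j = l then X ! ((j + i) mod d) else 0\<^sub>m n n)"
  proof -
    have "X ! ((k + i) mod d) \<in> carrier_mat n n" for k
      using assms by simp
    then show ?thesis
      by (subst diag_block_mat_eq_block_mat[where n = n]) (auto intro!: block_mat_cong)
  qed
  finally show ?thesis .
qed

lemma sharp_flat_eq_kron_mat:
  assumes "0 < d" "unit_inv \<mu> * \<mu> = 1" "Z \<in> carrier_mat m m"
  shows "sharp d \<mu> (flat d \<mu> Z) = kron_mat (perm_mat d (\<lambda>j. (j + d - 1) mod d)) Z"
  using assms
  by (auto simp: sharp_eq_block_mat[where n = m] flat_def kron_mat_def perm_mat_def mult.assoc[symmetric]
      intro!: block_mat_cong)

lemma MCM_sum_twists_eq_kron_mat: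
  assumes "Z \<in> carrier_mat m m"
  shows "MCM_sum (map (\<lambda>k. restrict_sigma \<omega> k Z) [0..<d]) = kron_mat (diag_powers_mat d \<omega>) Z"
proof -
  have "MCM_sum (map (\<lambda>k. restrict_sigma \<omega> k Z) [0..<d])
      = block_mat d m (\<lambda>j l. if j = l then \<omega> ^ j \<cdot>\<^sub>m Z else 0\<^sub>m m m)"
    unfolding MCM_sum_def restrict_sigma_def
    by (subst diag_block_mat_eq_block_mat[where n = m]) (use assms in \<open>auto intro!: block_mat_cong\<close>)
  then show ?thesis
    using assms by (auto simp: kron_mat_def diag_powers_mat_def intro!: block_mat_cong)
qed

lemma MF_iso_by_involutive_hom:
  assumes "0 < d"
    and "\<And>i. i < d \<Longrightarrow> X ! i \<in> carrier_mat N N" "\<And>i. i < d \<Longrightarrow> X' ! i \<in> carrier_mat N N"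
    and "\<And>i. i < d \<Longrightarrow> A i \<in> carrier_mat N N" "\<And>i. i < d \<Longrightarrow> A i * A i = 1\<^sub>m N"
    and hom: "\<And>i. i < d \<Longrightarrow> A i * X ! i = X' ! i * A (Suc i mod d)"
  shows "MF_iso d X X'"
proof -
  have hom_back: "A i * X' ! i = X ! i * A (Suc i mod d)" if i: "i < d" for i
  proof -
    define i' where "i' = Suc i mod d"
    have i': "i' < d" using assms(1) by (simp add: i'_def)
    have A: "A i \<in> carrier_mat N N" "A i' \<in> carrier_mat N N"
      and X: "X ! i \<in> carrier_mat N N" "X' ! i \<in> carrier_mat N N"
      using assms i i' by auto
    have "A i * X' ! i = A i * X' ! i * (A i' * A i')"
      using A X assms(5)[OF i'] by simp
    also have "\<dots> = A i * (X' ! i * A i') * A i'"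
      using A X by (simp add: assoc_mult_mat[of _ N N _ N _ N])
    also have "\<dots> = (A i * A i) * X ! i * A i'"
      using A X hom[OF i] by (simp add: i'_def assoc_mult_mat[of _ N N _ N _ N])
    also have "\<dots> = X ! i * A i'"
      using A X assms(5)[OF i] by simp
    finally show ?thesis by (simp add: i'_def)
  qed
  have dims: "dim_row (X ! 0) = N" "dim_row (X' ! 0) = N"
    using assms(1-3) by auto
  show ?thesis
    unfolding MF_iso_def is_MF_hom_def dims
    by (rule exI[of _ "map A [0..<d]"], rule exI[of _ "map A [0..<d]"])
      (use assms hom_back in auto)
qed

lemma MF_iso_flat_sharp:
  fixes X :: "'a::comm_ring_1 mat list"
  assumes "0 < d" "\<mu> * unit_inv \<mu> = 1"
    and "length X = d" "\<And>i. i < d \<Longrightarrow> X ! i \<in> carrier_mat n n"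
  shows "MF_iso d (flat d \<mu> (sharp d \<mu> X)) (MF_sum d (map (\<lambda>k. MF_shift k X) [0..<d]))"
proof -
  define W where "W = block_mat d n (\<lambda>j l.
    if l = (j + d - 1) mod d then X ! ((2 * d - j - 1) mod d) else 0\<^sub>m n n)"
  define D where "D i = block_mat d n (\<lambda>j l. if j = l then X ! ((j + i) mod d) else 0\<^sub>m n n)" for i
  define A :: "nat \<Rightarrow> 'a mat" where "A i = kron_mat (perm_mat d (mirror_index d i)) (1\<^sub>m n)" for i
  have blocks: "X ! (k mod d) \<in> carrier_mat n n" for k
    using assms by simp
  have mirror: "mirror_index d i j < d" "mirror_index d i (mirror_index d i j) = j" if "j < d" for i j
    using that by (simp_all add: mirror_index_less mirror_index_involution)
  have flat: "flat d \<mu> (sharp d \<mu> X) ! i = W" if "i < d" for i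
    using flat_sharp_eq_block_mat[OF assms(2,4) that] by (simp add: W_def)
  have sum: "MF_sum d (map (\<lambda>k. MF_shift k X) [0..<d]) ! i = D i" if "i < d" for i
    using MF_sum_shifts_eq_block_mat[OF assms(3,4) that] by (simp add: D_def)
  have "A i * A i = 1\<^sub>m (d * n)" for i
  proof -
    have "A i * A i
        = kron_mat (perm_mat d (mirror_index d i) * perm_mat d (mirror_index d i)) (1\<^sub>m n * 1\<^sub>m n)"
      unfolding A_def by (rule kron_mat_mult) auto
    also have "\<dots> = 1\<^sub>m (d * n)"
      using mirror by (simp add: perm_mat_mult_self_involution kron_mat_one)
    finally show ?thesis .
  qed
  moreover have "A i * W = D i * A (Suc i mod d)" if "i < d" for i
  proof -
    have "A i * W = block_mat d n (\<lambda>j l. if l = (mirror_index d i j + d - 1) mod d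
        then X ! ((2 * d - mirror_index d i j - 1) mod d) else 0\<^sub>m n n)"
      unfolding A_def W_def by (rule kron_perm_mat_mult_block_mat) (use mirror blocks in auto)
    also have "\<dots> = block_mat d n (\<lambda>j l.
        if j = mirror_index d (Suc i mod d) l then X ! ((j + i) mod d) else 0\<^sub>m n n)"
    proof (rule block_mat_cong)
      fix j l a b assume jl: "j < d" "l < d"
      have "l = (mirror_index d i j + d - 1) mod d \<longleftrightarrow> j = mirror_index d (Suc i mod d) l"
        using jl by (rule mirror_index_pred)
      moreover have "(2 * d - mirror_index d i j - 1) mod d = (j + i) mod d"
        using jl(1) by (rule mirror_index_reverse)
      ultimately show "(if l = (mirror_index d i j + d - 1) mod d
          then X ! ((2 * d - mirror_index d i j - 1) mod d) else 0\<^sub>m n n) $$ (a, b)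
        = (if j = mirror_index d (Suc i mod d) l then X ! ((j + i) mod d) else 0\<^sub>m n n) $$ (a, b)"
        by (simp only:)
    qed
    also have "\<dots> = D i * A (Suc i mod d)"
      unfolding A_def D_def by (rule block_mat_mult_kron_perm_mat[symmetric]) (use mirror blocks in auto)
    finally show ?thesis .
  qed
  ultimately show ?thesis
    using assms(1) flat sum
    by (intro MF_iso_by_involutive_hom[where A = A and N = "d * n"])
      (simp_all add: W_def D_def A_def kron_mat_carrier)
qed

lemma MCM_iso_sharp_flat:
  fixes Z :: "'a::comm_ring_1 mat"
  assumes loc: "local_ring TYPE('a)" and d_unit: "of_nat d \<notin> (max_ideal :: 'a set)"
    and prim: "primitive_root d \<omega>" and "0 < d" and "unit_inv \<mu> * \<mu> = 1"
    and Z: "Z \<in> carrier_mat m m"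
  shows "MCM_iso (sharp d \<mu> (flat d \<mu> Z)) (MCM_sum (map (\<lambda>k. restrict_sigma \<omega> k Z) [0..<d]))"
proof -
  obtain d_inv where d_inv: "d_inv * of_nat d = (1::'a)"
    using d_unit by (auto simp: max_ideal_def mult.commute elim: dvdE)
  define \<omega>' where "\<omega>' = \<omega> ^ (d - 1)"
  have \<omega>': "\<omega>' * \<omega> = 1"
    using prim \<open>0 < d\<close> by (simp add: \<omega>'_def primitive_root_def flip: power_Suc2)
  define C :: "'a mat" where "C = perm_mat d (\<lambda>j. (j + d - 1) mod d)"
  define P where "P = kron_mat (dft_mat d \<omega>) (1\<^sub>m m)"
  define Q where "Q = kron_mat (d_inv \<cdot>\<^sub>m dft_mat d \<omega>') (1\<^sub>m m)"
  have carriers: "P \<in> carrier_mat (d * m) (d * m)" "Q \<in> carrier_mat (d * m) (d * m)"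
    by (simp_all add: P_def Q_def kron_mat_carrier)
  have scale: "d_inv \<cdot>\<^sub>m (of_nat d \<cdot>\<^sub>m 1\<^sub>m d) = 1\<^sub>m d"
    using d_inv by (intro eq_matI) (auto simp: mult.assoc[symmetric])
  have QP: "Q * P = 1\<^sub>m (d * m)"
  proof -
    have "Q * P = kron_mat ((d_inv \<cdot>\<^sub>m dft_mat d \<omega>') * dft_mat d \<omega>) (1\<^sub>m m * 1\<^sub>m m)"
      unfolding P_def Q_def by (rule kron_mat_mult) auto
    also have "(d_inv \<cdot>\<^sub>m dft_mat d \<omega>') * dft_mat d \<omega> = d_inv \<cdot>\<^sub>m (dft_mat d \<omega>' * dft_mat d \<omega>)"
      by (rule mult_smult_assoc_mat) auto
    also have "\<dots> = 1\<^sub>m d"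
      using dft_mat_mult_inverse(1)[OF loc d_unit prim \<omega>'] scale by simp
    finally show ?thesis by (simp add: kron_mat_one)
  qed
  have PQ: "P * Q = 1\<^sub>m (d * m)"
  proof -
    have "P * Q = kron_mat (dft_mat d \<omega> * (d_inv \<cdot>\<^sub>m dft_mat d \<omega>')) (1\<^sub>m m * 1\<^sub>m m)"
      unfolding P_def Q_def by (rule kron_mat_mult) auto
    also have "dft_mat d \<omega> * (d_inv \<cdot>\<^sub>m dft_mat d \<omega>') = d_inv \<cdot>\<^sub>m (dft_mat d \<omega> * dft_mat d \<omega>')"
      by (rule mult_smult_distrib) auto
    also have "\<dots> = 1\<^sub>m d"
      using dft_mat_mult_inverse(2)[OF loc d_unit prim \<omega>'] scale by simp
    finally show ?thesis by (simp add: kron_mat_one)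
  qed
  have "P * kron_mat C Z = kron_mat (dft_mat d \<omega> * C) (1\<^sub>m m * Z)"
    unfolding P_def C_def using Z by (intro kron_mat_mult) auto
  also have "\<dots> = kron_mat (diag_powers_mat d \<omega> * dft_mat d \<omega>) (Z * 1\<^sub>m m)"
  proof -
    have "\<omega> ^ d = 1" using prim by (simp add: primitive_root_def)
    then show ?thesis
      unfolding C_def by (subst dft_mat_mult_cycle) (use Z in simp_all)
  qed
  also have "\<dots> = kron_mat (diag_powers_mat d \<omega>) Z * P"
    unfolding P_def using Z by (intro kron_mat_mult[symmetric]) auto
  finally have intertwine: "P * kron_mat C Z = kron_mat (diag_powers_mat d \<omega>) Z * P" .
  show ?thesis
    unfolding MCM_iso_def
    using carriers QP PQ intertwine Z assms(4,5)
    by (auto simp: C_def sharp_flat_eq_kron_mat MCM_sum_twists_eq_kron_mat kron_mat_def)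
qed

theorem proposition2p4:
  fixes d :: nat and f \<mu> \<omega> :: "'a::comm_ring_1"
  assumes "d \<ge> 2"
    and "regular_local_ring TYPE('a)" and "complete_local_ring TYPE('a)"
    and "residue_field_alg_closed TYPE('a)"
    and "of_nat d \<notin> (max_ideal :: 'a set)"
    and "f \<noteq> 0" and "f \<in> ideal_pow max_ideal 2"
    and "\<mu> ^ d = -1" and "primitive_root d \<omega>"
  shows "(\<forall>n X. is_MF d f n X \<longrightarrow>
            MF_iso d (flat d \<mu> (sharp d \<mu> X)) (MF_sum d (map (\<lambda>k. MF_shift k X) [0..<d])))
       \<and> (\<forall>Z. is_MCM d f Z \<longrightarrow>
            MCM_iso (sharp d \<mu> (flat d \<mu> Z)) (MCM_sum (map (\<lambda>k. restrict_sigma \<omega> k Z) [0..<d])))"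
proof (intro conjI allI impI)
  have d: "0 < d" using assms(1) by simp
  have \<mu>: "\<mu> * unit_inv \<mu> = 1" using assms(8) d by (rule mult_unit_inv_if_power_eq_minus_one)
  have loc: "local_ring TYPE('a)" using assms(2) by (simp add: regular_local_ring_def)
  show "MF_iso d (flat d \<mu> (sharp d \<mu> X)) (MF_sum d (map (\<lambda>k. MF_shift k X) [0..<d]))"
    if "is_MF d f n X" for n X
    using that d \<mu> by (intro MF_iso_flat_sharp[where n = n]) (auto simp: is_MF_def)
  show "MCM_iso (sharp d \<mu> (flat d \<mu> Z)) (MCM_sum (map (\<lambda>k. restrict_sigma \<omega> k Z) [0..<d]))"
    if "is_MCM d f Z" for Z
    using that d \<mu> by (intro MCM_iso_sharp_flat[OF loc assms(5,9)]) (auto simp: is_MCM_def mult.commute)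
qed

end
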